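(* The monoid $M := \langle x,y,z \mid (xy,\, yzx)\rangle$ is cancellative and BF, and $\rho(M) = 2$, but $M$ does not have accepted elasticity.
   Context: $M$ is the monoid with generators $x,y,z$ subject to the single relation $xy=yzx$; $\langle x,y,z\rangle$ is the free monoid on these letters. $|a|$ is word length; $a=_M b$ means equal images in $M$. $\mathsf{L}_M(a):=\{|b| : b\in\langle x,y,z\rangle,\ b=_M a\}$, $\mathcal{L}(M):=\{\mathsf{L}_M(a)\}$. $M$ is BF if every $\mathsf{L}_M(a)$ is finite; cancellative if $ab=ac$ or $ba=ca$ implies $b=c$. For $L\subseteq\mathbb{N}$, $\rho(L):=\sup(L\cap\mathbb{N}^+)/\min(L\cap\mathbb{N}^+)$ if $L\cap\mathbb{N}^+\ne\emptyset$, and $0$ otherwise; $\rho(M):=\sup\{\rho(L):L\in\mathcal{L}(M)\}$. $M$ has accepted elasticity if $\rho(M)=\rho(L)<\infty$ for some $L\in\mathcal{L}(M)$. *)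

theory Defs
  imports "HOL-Library.Extended_Real"
begin

datatype letter = X | Y | Z

inductive rel_step :: "letter list \<Rightarrow> letter list \<Rightarrow> bool" where
  fwd: "rel_step (u @ [X, Y] @ v) (u @ [Y, Z, X] @ v)"
| bwd: "rel_step (u @ [Y, Z, X] @ v) (u @ [X, Y] @ v)"

definition eqM :: "letter list \<Rightarrow> letter list \<Rightarrow> bool" where
  "eqM a b \<longleftrightarrow> rel_step\<^sup>*\<^sup>* a b"

definition LM :: "letter list \<Rightarrow> nat set" where
  "LM a = {length b | b. eqM b a}"

definition setsM :: "nat set set" where
  "setsM = {LM a | a. True}"

definition BF_M :: bool where
  "BF_M \<longleftrightarrow> (\<forall>a. finite (LM a))"

definition cancellative_M :: bool where
  "cancellative_M \<longleftrightarrow>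
     (\<forall>a b c. (eqM (a @ b) (a @ c) \<longrightarrow> eqM b c) \<and> (eqM (b @ a) (c @ a) \<longrightarrow> eqM b c))"

definition rho :: "nat set \<Rightarrow> ereal" where
  "rho L = (if L \<inter> {1..} \<noteq> {}
            then Sup ((\<lambda>n. ereal (real n)) ` (L \<inter> {1..})) / ereal (real (Inf (L \<inter> {1..})))
            else 0)"

definition rhoM :: ereal where
  "rhoM = Sup (rho ` setsM)"

definition accepted_elasticity_M :: bool where
  "accepted_elasticity_M \<longleftrightarrow> (\<exists>L\<in>setsM. rhoM = rho L \<and> rhoM < \<infinity>)"

end

theory Submission
  imports Defs "HOL-Library.Confluence"
begin

(*
  Oriented as yzx \<rightarrow> xy, the defining relation becomes a length-decreasing rewriting
  system whose left-hand side yzx overlaps itself only trivially; such a system is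
  confluent, so two words are equal in M iff they have a common reduct.  A reduct of
  c w with c \<noteq> y still starts with c, and a reduct of y w has the form x^j y w' with
  w = (zx)^j w' in M; this gives left cancellation, and the anti-automorphism that
  reverses words and swaps x and y turns it into right cancellation.

  A z is isolated if both its neighbours exist and differ from z.  Each relation step
  changes the length and the number of isolated z's by one, and fewer than half of the
  letters of a nonempty word are isolated z's.  Hence |b| < 2|c| whenever b = c in M:
  length sets are finite and every elasticity is below 2, while x^n y = y (zx)^n has
  elasticity at least (2n+1)/(n+1), which tends to 2.
*)

definition replace_factor :: "'a list \<Rightarrow> 'a list \<Rightarrow> 'a list \<Rightarrow> 'a list \<Rightarrow> bool" where
  "replace_factor l r a b \<longleftrightarrow> (\<exists>u v. a = u @ l @ v \<and> b = u @ r @ v)"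

definition unbordered :: "'a list \<Rightarrow> bool" where
  "unbordered l \<longleftrightarrow> (\<forall>k. 0 < k \<and> k < length l \<longrightarrow> take k l \<noteq> drop (length l - k) l)"

lemma replace_factorI: "replace_factor l r (u @ l @ v) (u @ r @ v)"
  unfolding replace_factor_def by blast

lemma replace_factor_append_left:
  "replace_factor l r a b \<Longrightarrow> replace_factor l r (p @ a) (p @ b)"
  unfolding replace_factor_def by (metis append.assoc)

lemma unbordered_overlap:
  assumes "unbordered l" and "l @ v = s @ l @ w"
  shows "s = [] \<or> (\<exists>m. s = l @ m \<and> v = m @ l @ w)"
proof -
  from assms(2) obtain t where "l = s @ t \<and> t @ v = l @ w \<or> l @ t = s \<and> v = t @ l @ w"
    by (auto simp: append_eq_append_conv2)
  then show ?thesis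
  proof
    assume st: "l = s @ t \<and> t @ v = l @ w"
    show ?thesis
    proof (cases "s = [] \<or> t = []")
      case True
      then show ?thesis using st by auto
    next
      case False
      have "take (length t) l = t"
        using st by (metis append_eq_append_conv_if length_append le_add2)
      moreover have "drop (length l - length t) l = t"
        using st by simp
      ultimately show ?thesis
        using assms(1) False st unfolding unbordered_def by force
    qed
  qed blast
qed

lemma replace_factor_overlap_join:
  assumes "unbordered l" and "l @ v1 = s @ l @ v2"
  shows "\<exists>c. (replace_factor l r)\<^sup>=\<^sup>= (u @ r @ v1) c \<and> (replace_factor l r)\<^sup>=\<^sup>= (u @ s @ r @ v2) c"
  using unbordered_overlap[OF assms]
proof
  assume "s = []"
  then show ?thesis using assms(2) by auto
next
  assume "\<exists>m. s = l @ m \<and> v1 = m @ l @ v2"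
  then obtain m where m: "s = l @ m" "v1 = m @ l @ v2" by blast
  have "replace_factor l r (u @ r @ v1) (u @ r @ m @ r @ v2)"
    using replace_factorI[of l r "u @ r @ m" v2] m(2) by simp
  moreover have "replace_factor l r (u @ s @ r @ v2) (u @ r @ m @ r @ v2)"
    using replace_factorI[of l r u "m @ r @ v2"] m(1) by simp
  ultimately show ?thesis by blast
qed

lemma strong_confluentp_replace_factor:
  assumes "unbordered l"
  shows "strong_confluentp (replace_factor l r)"
proof
  fix w y z
  assume "replace_factor l r w y" "replace_factor l r w z"
  then obtain u1 v1 u2 v2 where w: "u1 @ l @ v1 = u2 @ l @ v2"
    and y: "y = u1 @ r @ v1" and z: "z = u2 @ r @ v2"
    unfolding replace_factor_def by metis
  obtain s where "u1 = u2 @ s \<and> s @ l @ v1 = l @ v2 \<or> u1 @ s = u2 \<and> l @ v1 = s @ l @ v2"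
    using append_eq_append_conv2[THEN iffD1, OF w] by blast
  then obtain c where "(replace_factor l r)\<^sup>=\<^sup>= y c" "(replace_factor l r)\<^sup>=\<^sup>= z c"
  proof
    assume "u1 = u2 @ s \<and> s @ l @ v1 = l @ v2"
    moreover from this obtain c where
      "(replace_factor l r)\<^sup>=\<^sup>= (u2 @ r @ v2) c" "(replace_factor l r)\<^sup>=\<^sup>= (u2 @ s @ r @ v1) c"
      using replace_factor_overlap_join[OF assms] by metis
    ultimately show thesis using that y z by simp
  next
    assume "u1 @ s = u2 \<and> l @ v1 = s @ l @ v2"
    moreover from this obtain c where
      "(replace_factor l r)\<^sup>=\<^sup>= (u1 @ r @ v1) c" "(replace_factor l r)\<^sup>=\<^sup>= (u1 @ s @ r @ v2) c"
      using replace_factor_overlap_join[OF assms] by metis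
    ultimately show thesis using that y z by (metis append.assoc)
  qed
  then show "\<exists>c. (replace_factor l r)\<^sup>*\<^sup>* y c \<and> (replace_factor l r)\<^sup>=\<^sup>= z c"
    by blast
qed

lemma equivclp_replace_factor_joinable:
  assumes "unbordered l" and "equivclp (replace_factor l r) a b"
  shows "\<exists>c. (replace_factor l r)\<^sup>*\<^sup>* a c \<and> (replace_factor l r)\<^sup>*\<^sup>* b c"
  using assms(2) strong_confluentp_replace_factor[OF assms(1)]
  by (auto simp: semiconfluentp_equivclp strong_confluentp_into_semiconfluentp rtranclp_conversep)

lemma replace_factor_Cons_cases:
  assumes "replace_factor l r (c # b) w"
  obtains v where "c # b = l @ v" "w = r @ v"
    | w' where "w = c # w'" "replace_factor l r b w'"
proof -
  obtain u v where a: "c # b = u @ l @ v" and w: "w = u @ r @ v"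
    using assms unfolding replace_factor_def by blast
  show thesis
  proof (cases u)
    case Nil
    then show thesis using that(1) a w by simp
  next
    case (Cons d u')
    then show thesis using that(2)[of "u' @ r @ v"] a w replace_factorI[of l r u' v] by simp
  qed
qed

lemma replace_factor_append_left_cases:
  assumes "replace_factor l r (p @ b) w" and "l \<noteq> []" and "hd l \<notin> set p"
  shows "\<exists>w'. w = p @ w' \<and> replace_factor l r b w'"
  using assms
proof (induction p arbitrary: w)
  case Nil then show ?case by simp
next
  case (Cons c p)
  then show ?case
    by (auto elim!: replace_factor_Cons_cases simp: Cons_eq_append_conv)
qed

lemma rtranclp_replace_factor_Cons:
  assumes "(replace_factor l r)\<^sup>*\<^sup>* (c # b) w" and "l \<noteq> []" and "c \<noteq> hd l"
  shows "\<exists>w'. w = c # w' \<and> (replace_factor l r)\<^sup>*\<^sup>* b w'"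
  using assms(1)
proof (induction rule: rtranclp_induct)
  case base then show ?case by blast
next
  case (step w1 w2)
  then obtain w1' where "w1 = c # w1'" "(replace_factor l r)\<^sup>*\<^sup>* b w1'" by blast
  with step.hyps(2) assms(2,3) show ?case
    using replace_factor_append_left_cases[of l r "[c]" w1' w2]
    by (auto intro: rtranclp.rtrancl_into_rtrancl)
qed

lemma equivclp_map:
  assumes "\<And>a b. r a b \<Longrightarrow> r (f a) (f b)" and "equivclp r a b"
  shows "equivclp r (f a) (f b)"
  using assms(2) by (induction rule: equivclp_induct) (auto intro: equivclp_into_equivclp assms(1))

abbreviation reduce :: "letter list \<Rightarrow> letter list \<Rightarrow> bool" where
  "reduce \<equiv> replace_factor [Y, Z, X] [X, Y]"

lemma unbordered_YZX: "unbordered [Y, Z, X]"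
  unfolding unbordered_def by (auto simp: less_Suc_eq numeral_3_eq_3)

lemma rel_step_eq_symclp_reduce: "rel_step = symclp reduce"
proof (intro ext iffI)
  fix a b
  assume "rel_step a b"
  then show "symclp reduce a b"
    by cases (simp_all only: symclpI1 symclpI2 replace_factorI)
next
  fix a b
  assume "symclp reduce a b"
  then show "rel_step a b"
  proof cases
    case base
    then show ?thesis unfolding replace_factor_def using rel_step.bwd by blast
  next
    case sym
    then show ?thesis unfolding replace_factor_def using rel_step.fwd by blast
  qed
qed

lemma eqM_eq_equivclp_reduce: "eqM = equivclp reduce"
  unfolding eqM_def[abs_def] equivclp_def rel_step_eq_symclp_reduce ..

lemma eqM_refl [simp]: "eqM a a"
  by (simp add: eqM_eq_equivclp_reduce)

lemma eqM_sym: "eqM a b \<Longrightarrow> eqM b a"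
  unfolding eqM_eq_equivclp_reduce by (rule equivclp_sym)

lemma eqM_trans: "eqM a b \<Longrightarrow> eqM b c \<Longrightarrow> eqM a c"
  unfolding eqM_eq_equivclp_reduce by (rule equivclp_trans)

lemma eqM_joinable: "eqM a b \<Longrightarrow> \<exists>c. reduce\<^sup>*\<^sup>* a c \<and> reduce\<^sup>*\<^sup>* b c"
  unfolding eqM_eq_equivclp_reduce by (rule equivclp_replace_factor_joinable[OF unbordered_YZX])

definition zx_pow :: "nat \<Rightarrow> letter list" where
  "zx_pow j = concat (replicate j [Z, X])"

lemma zx_pow_0 [simp]: "zx_pow 0 = []"
  by (simp add: zx_pow_def)

lemma zx_pow_Suc: "zx_pow (Suc j) = Z # X # zx_pow j"
  by (simp add: zx_pow_def)

lemma zx_pow_Suc': "zx_pow (Suc j) = zx_pow j @ [Z, X]"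
  by (induction j) (simp_all add: zx_pow_Suc)

lemma length_zx_pow [simp]: "length (zx_pow j) = 2 * j"
  by (induction j) (simp_all add: zx_pow_Suc)

lemma reduce_star_zx_pow: "reduce\<^sup>*\<^sup>* (p @ Y # zx_pow n) (p @ replicate n X @ [Y])"
proof (induction n arbitrary: p)
  case 0 then show ?case by simp
next
  case (Suc n)
  have "reduce (p @ [Y, Z, X] @ zx_pow n) (p @ [X, Y] @ zx_pow n)"
    by (rule replace_factorI)
  moreover have "reduce\<^sup>*\<^sup>* ((p @ [X]) @ Y # zx_pow n) ((p @ [X]) @ replicate n X @ [Y])"
    by (rule Suc.IH)
  ultimately show ?case
    by (simp add: zx_pow_Suc converse_rtranclp_into_rtranclp)
qed

lemma eqM_Y_zx_pow: "eqM (Y # zx_pow n) (replicate n X @ [Y])"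
  unfolding eqM_eq_equivclp_reduce
  using reduce_star_zx_pow[of "[]" n] by (intro rtranclp_into_equivclp) simp

lemma reduce_star_from_Y:
  assumes "reduce\<^sup>*\<^sup>* (Y # b) w"
  shows "\<exists>j w'. w = replicate j X @ Y # w' \<and> eqM b (zx_pow j @ w')"
  using assms
proof (induction rule: rtranclp_induct)
  case base
  have "Y # b = replicate 0 X @ Y # b \<and> eqM b (zx_pow 0 @ b)"
    by simp
  then show ?case by blast
next
  case (step w1 w2)
  then obtain j w1' where w1: "w1 = replicate j X @ Y # w1'" and b: "eqM b (zx_pow j @ w1')"
    by blast
  obtain w2' where w2: "w2 = replicate j X @ w2'" and "reduce (Y # w1') w2'"
    using replace_factor_append_left_cases[of "[Y, Z, X]" "[X, Y]" "replicate j X"] step.hyps(2) w1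
    by auto
  from \<open>reduce (Y # w1') w2'\<close> show ?case
  proof (cases rule: replace_factor_Cons_cases)
    case (1 v)
    then have "w2 = replicate (Suc j) X @ Y # v" and "zx_pow j @ w1' = zx_pow (Suc j) @ v"
      using w2 by (simp_all add: zx_pow_Suc' replicate_app_Cons_same)
    then show ?thesis using b by metis
  next
    case (2 w2'')
    from 2(2) have "reduce (zx_pow j @ w1') (zx_pow j @ w2'')"
      by (rule replace_factor_append_left)
    then have "eqM b (zx_pow j @ w2'')"
      using b unfolding eqM_eq_equivclp_reduce by (blast intro: equivclp_into_equivclp)
    then show ?thesis using w2 2 by blast
  qed
qed

lemma replicate_X_Y_inj:
  "replicate j X @ Y # p = replicate k X @ Y # q \<Longrightarrow> j = k \<and> p = q"
proof (induction j arbitrary: k)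
  case 0 then show ?case by (cases k) auto
next
  case (Suc j) then show ?case by (cases k) auto
qed

lemma eqM_Cons_cancel:
  assumes "eqM (c # a) (c # b)"
  shows "eqM a b"
proof -
  obtain w where wa: "reduce\<^sup>*\<^sup>* (c # a) w" and wb: "reduce\<^sup>*\<^sup>* (c # b) w"
    using eqM_joinable[OF assms] by blast
  show ?thesis
  proof (cases "c = Y")
    case True
    obtain j a' where a: "w = replicate j X @ Y # a'" "eqM a (zx_pow j @ a')"
      using reduce_star_from_Y wa True by blast
    obtain k b' where b: "w = replicate k X @ Y # b'" "eqM b (zx_pow k @ b')"
      using reduce_star_from_Y wb True by blast
    from a(1) b(1) have "j = k" "a' = b'"
      using replicate_X_Y_inj by blast+
    then show ?thesis
      using a(2) b(2) by (metis eqM_sym eqM_trans)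
  next
    case False
    obtain a' where a': "w = c # a'" "reduce\<^sup>*\<^sup>* a a'"
      using rtranclp_replace_factor_Cons[OF wa] False by auto
    obtain b' where b': "w = c # b'" "reduce\<^sup>*\<^sup>* b b'"
      using rtranclp_replace_factor_Cons[OF wb] False by auto
    have "a' = b'"
      using a'(1) b'(1) by simp
    then have "eqM a a'" "eqM b a'"
      using a'(2) b'(2) unfolding eqM_eq_equivclp_reduce by (auto intro: rtranclp_into_equivclp)
    then show ?thesis
      by (metis eqM_sym eqM_trans)
  qed
qed

lemma eqM_append_cancel_left: "eqM (p @ a) (p @ b) \<Longrightarrow> eqM a b"
  by (induction p) (simp_all add: eqM_Cons_cancel)

fun swap_XY :: "letter \<Rightarrow> letter" where
  "swap_XY X = Y" | "swap_XY Y = X" | "swap_XY Z = Z"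

definition mirror :: "letter list \<Rightarrow> letter list" where
  "mirror w = map swap_XY (rev w)"

lemma swap_XY_swap_XY [simp]: "swap_XY (swap_XY c) = c"
  by (cases c) simp_all

lemma mirror_mirror [simp]: "mirror (mirror w) = w"
  by (simp add: mirror_def rev_map comp_def)

lemma mirror_append [simp]: "mirror (a @ b) = mirror b @ mirror a"
  by (simp add: mirror_def)

lemma reduce_mirror: "reduce a b \<Longrightarrow> reduce (mirror a) (mirror b)"
proof (elim replace_factor_def[THEN iffD1, elim_format] exE conjE)
  fix u v
  assume "a = u @ [Y, Z, X] @ v" "b = u @ [X, Y] @ v"
  then show "reduce (mirror a) (mirror b)"
    using replace_factorI[of "[Y, Z, X]" "[X, Y]" "mirror v" "mirror u"] by (simp add: mirror_def)
qed

lemma eqM_mirror: "eqM a b \<Longrightarrow> eqM (mirror a) (mirror b)"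
  unfolding eqM_eq_equivclp_reduce using equivclp_map[of reduce mirror] reduce_mirror by blast

lemma eqM_append_cancel_right: "eqM (a @ p) (b @ p) \<Longrightarrow> eqM a b"
  by (metis eqM_mirror eqM_append_cancel_left mirror_append mirror_mirror)

fun isolated_Z_after :: "letter \<Rightarrow> letter list \<Rightarrow> nat" where
  "isolated_Z_after c (Z # d # w) = (if c \<noteq> Z \<and> d \<noteq> Z then 1 else 0)"
| "isolated_Z_after c w = 0"

primrec isolated_Zs :: "letter list \<Rightarrow> nat" where
  "isolated_Zs [] = 0"
| "isolated_Zs (c # w) = isolated_Z_after c w + isolated_Zs w"

lemma isolated_Z_after_Z [simp]: "isolated_Z_after Z w = 0"
  by (cases "(Z, w)" rule: isolated_Z_after.cases) auto

lemma isolated_Z_after_le_1: "isolated_Z_after c w \<le> 1"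
  by (cases "(c, w)" rule: isolated_Z_after.cases) auto

lemma isolated_Z_after_Cons: "d \<noteq> Z \<Longrightarrow> isolated_Z_after c (d # w) = 0"
  by (cases d) auto

lemma isolated_Z_after_X_eq_Y: "isolated_Z_after X w = isolated_Z_after Y w"
  by (cases "(X, w)" rule: isolated_Z_after.cases) auto

lemma isolated_Z_after_reduce:
  "isolated_Z_after c (u @ Y # Z # X # v) = isolated_Z_after c (u @ X # Y # v)"
proof (cases u)
  case Nil then show ?thesis by simp
next
  case (Cons d u')
  then show ?thesis by (cases u'; cases d) auto
qed

lemma isolated_Zs_reduce: "isolated_Zs (u @ Y # Z # X # v) = Suc (isolated_Zs (u @ X # Y # v))"
  by (induction u) (simp_all add: isolated_Z_after_X_eq_Y isolated_Z_after_reduce)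

lemma eqM_length_isolated_Zs:
  "eqM a b \<Longrightarrow> length a + isolated_Zs b = length b + isolated_Zs a"
  unfolding eqM_eq_equivclp_reduce
  by (induction rule: equivclp_induct) (auto simp: replace_factor_def isolated_Zs_reduce)

lemma isolated_Zs_less: "w \<noteq> [] \<Longrightarrow> 2 * isolated_Zs w < length w"
proof (induction w rule: induct_list012)
  case (3 c d w)
  show ?case
  proof (cases "d = Z \<and> w \<noteq> []")
    case True
    then have "2 * isolated_Zs w < length w" using 3 by blast
    moreover have "isolated_Zs (c # d # w) \<le> 1 + isolated_Zs w"
      using True isolated_Z_after_le_1[of c "d # w"] by simp
    ultimately show ?thesis by simp
  next
    case False
    then have "isolated_Z_after c (d # w) = 0"
      by (cases "d = Z") (simp_all add: isolated_Z_after_Cons)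
    then show ?thesis using 3 by simp
  qed
qed simp_all

lemma eqM_length_less: "eqM b c \<Longrightarrow> b \<noteq> [] \<Longrightarrow> length b < 2 * length c"
  using eqM_length_isolated_Zs[of b c] isolated_Zs_less[of b] by simp

lemma LM_subset_atMost: "LM a \<subseteq> {..2 * length a}"
  unfolding LM_def by (auto dest: eqM_length_less)

lemma finite_LM: "finite (LM a)"
  using LM_subset_atMost by (rule finite_subset) simp

lemma length_in_LM: "eqM b a \<Longrightarrow> length b \<in> LM a"
  unfolding LM_def by blast

lemma rho_eq_Max_div_Min:
  assumes "finite (L \<inter> {1..})" and "L \<inter> {1..} \<noteq> {}"
  shows "rho L = ereal (real (Max (L \<inter> {1..})) / real (Min (L \<inter> {1..})))"
proof -
  let ?S = "L \<inter> {1..}"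
  have "Sup ((\<lambda>n. ereal (real n)) ` ?S) = ereal (real (Max ?S))"
  proof (rule antisym)
    show "Sup ((\<lambda>n. ereal (real n)) ` ?S) \<le> ereal (real (Max ?S))"
      by (rule Sup_least) (use assms in auto)
    show "ereal (real (Max ?S)) \<le> Sup ((\<lambda>n. ereal (real n)) ` ?S)"
      by (rule Sup_upper) (use assms Max_in in blast)
  qed
  moreover have "Inf ?S = Min ?S"
    using assms by (rule cInf_eq_Min)
  moreover have "Min ?S \<ge> 1"
    using Min_in[OF assms] by simp
  ultimately show ?thesis
    unfolding rho_def using assms(2) by simp
qed

lemma rho_LM_less_2: "rho (LM a) < 2"
proof (cases "LM a \<inter> {1..} = {}")
  case True
  then show ?thesis by (simp add: rho_def)
next
  case False
  let ?S = "LM a \<inter> {1..}"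
  have fin: "finite ?S"
    by (simp add: finite_LM)
  have "Max ?S \<in> ?S"
    using fin False by (rule Max_in)
  then obtain b where b: "Max ?S = length b" "eqM b a" "b \<noteq> []"
    unfolding LM_def by fastforce
  obtain c where c: "Min ?S = length c" "eqM c a"
    using Min_in[OF fin False] unfolding LM_def by auto
  have "eqM b c"
    using b(2) c(2) by (metis eqM_sym eqM_trans)
  then have "length b < 2 * length c"
    using b(3) by (rule eqM_length_less)
  then have "real (length b) / real (length c) < 2"
    by (simp add: divide_less_eq)
  then show ?thesis
    using rho_eq_Max_div_Min[OF fin False] b(1) c(1) by simp
qed

lemma rho_LM_replicate_X_Y:
  "ereal (2 - 1 / (real n + 1)) \<le> rho (LM (replicate n X @ [Y]))"
proof -
  let ?w = "replicate n X @ [Y]"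
  let ?S = "LM ?w \<inter> {1..}"
  have fin: "finite ?S"
    by (simp add: finite_LM)
  have "n + 1 \<in> ?S"
    using length_in_LM[OF eqM_refl, of ?w] by simp
  moreover have "2 * n + 1 \<in> ?S"
    using length_in_LM[OF eqM_Y_zx_pow] by simp
  ultimately have ne: "?S \<noteq> {}" and "2 * n + 1 \<le> Max ?S" and "Min ?S \<le> n + 1"
    using fin by auto
  moreover have "Min ?S \<ge> 1"
    using Min_in[OF fin ne] by simp
  ultimately have "real (2 * n + 1) / real (n + 1) \<le> real (Max ?S) / real (Min ?S)"
    by (intro frac_le) auto
  moreover have "2 - 1 / (real n + 1) = real (2 * n + 1) / real (n + 1)"
    by (simp add: field_simps)
  ultimately show ?thesis
    using rho_eq_Max_div_Min[OF fin ne] by simp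
qed

lemma rhoM_eq_2: "rhoM = 2"
proof (rule antisym)
  show "rhoM \<le> 2"
    unfolding rhoM_def setsM_def using rho_LM_less_2 less_imp_le by (blast intro: Sup_least)
next
  show "2 \<le> rhoM"
  proof (rule ereal_le_epsilon2)
    fix e :: real
    assume "0 < e"
    then obtain n where n: "inverse (real (Suc n)) < e"
      using reals_Archimedean by blast
    have "ereal (2 - 1 / (real n + 1)) \<le> rhoM"
      unfolding rhoM_def setsM_def using rho_LM_replicate_X_Y
      by (blast intro: Sup_upper2)
    moreover have "2 - e \<le> 2 - 1 / (real n + 1)"
      using n by (simp add: inverse_eq_divide add.commute)
    ultimately have "ereal (2 - e) \<le> rhoM"
      by (meson ereal_less_eq(3) order_trans)
    then have "ereal (2 - e) + ereal e \<le> rhoM + ereal e"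
      by (rule add_right_mono)
    then show "2 \<le> rhoM + ereal e" by simp
  qed
qed

theorem proposition6p3:
  shows "cancellative_M \<and> BF_M \<and> rhoM = 2 \<and> \<not> accepted_elasticity_M"
proof (intro conjI)
  show cancellative_M
    unfolding cancellative_M_def using eqM_append_cancel_left eqM_append_cancel_right by blast
  show BF_M
    unfolding BF_M_def by (simp add: finite_LM)
  show "rhoM = 2" by (rule rhoM_eq_2)
  show "\<not> accepted_elasticity_M"
    unfolding accepted_elasticity_M_def setsM_def rhoM_eq_2 using rho_LM_less_2 by force
qed

end
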